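(* Let $\rho$ be a (complex) measure on the unit circle $S^1$, fix parameters $t=(t_i)_{i\ge1}$, $s=(s_i)_{i\ge1}$, and consider the bilinear form $\langle f,g\rangle=\oint_{S^1}\frac{\rho(dz)}{2\pi i z}f(z)g(z^{-1})e^{\sum_{i\ge1}(t_iz^i-s_iz^{-i})}$ on polynomials. Assume $\tau_n=\det(\langle z^k,z^\ell\rangle)_{0\le k,\ell\le n-1}\neq0$ for all $n\ge1$ ($\tau_0=1$), put $h_n=\tau_{n+1}/\tau_n$, and let $p^{(1)}_n,p^{(2)}_n$ ($n\ge0$) be the unique monic polynomials of degree $n$ with $\langle p^{(1)}_n,p^{(2)}_m\rangle=\delta_{nm}h_n$. Let $L_1$ and $M_2$ be the semi-infinite matrices (indices from $0$) defined by $zp^{(1)}_n(z)=\sum_m (L_1)_{n,m}p^{(1)}_m(z)$ and $zp^{(2)}_n(z)=\sum_m(M_2)_{n,m}p^{(2)}_m(z)$. Then for all $n\ge0$: $(L_1)_{n,n+1}=(M_2)_{n,n+1}=1$, $(L_1)_{n,m}=(M_2)_{n,m}=0$ for $m\ge n+2$, and for $0\le m\le n$, $$(L_1)_{n,m}=-\,h_n\,p^{(1)}_{n+1}(0)\,h_m^{-1}\,p^{(2)}_m(0),\qquad (M_2)_{n,m}=-\,h_n\,p^{(2)}_{n+1}(0)\,h_m^{-1}\,p^{(1)}_m(0).$$ Equivalently, $L_1=-\big(h\,p^{(1)}_\Lambda(0)\otimes h^{-1}p^{(2)}(0)\big)_{-0}+\Lambda$ and $M_2=-\big(h\,p^{(2)}_\Lambda(0)\otimes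 h^{-1}p^{(1)}(0)\big)_{-0}+\Lambda$.
   Context: $h=\operatorname{diag}(h_0,h_1,\dots)$; $p^{(i)}(0)=(p^{(i)}_0(0),p^{(i)}_1(0),\dots)$, $p^{(i)}_\Lambda(0)=(p^{(i)}_1(0),p^{(i)}_2(0),\dots)$; $u\otimes v$ is the matrix $(u_nv_m)$; $B_{-0}$ denotes the lower-triangular part of $B$ including the diagonal; $\Lambda$ is the shift matrix $\Lambda_{ij}=\delta_{j-i,1}$. (In the 2-Toda notation of the paper, $M_2=hL_2^{\top}h^{-1}$.) *)

theory Defs
  imports "HOL-Analysis.Analysis" "HOL-Computational_Algebra.Polynomial"
    "Jordan_Normal_Form.Determinant"
begin

definition toda_weight :: "(nat \<Rightarrow> complex) \<Rightarrow> (nat \<Rightarrow> complex) \<Rightarrow> complex \<Rightarrow> complex" where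
  "toda_weight t s z =
     exp (\<Sum>i. t (Suc i) * z ^ Suc i - s (Suc i) * inverse z ^ Suc i)"

text \<open>The complex measure rho is represented as w dM, with M a finite positive
  measure on the unit circle and w an M-integrable complex density.\<close>
definition bilin :: "complex measure \<Rightarrow> (complex \<Rightarrow> complex) \<Rightarrow> (nat \<Rightarrow> complex) \<Rightarrow>
    (nat \<Rightarrow> complex) \<Rightarrow> complex poly \<Rightarrow> complex poly \<Rightarrow> complex" where
  "bilin M w t s f g =
     integral\<^sup>L M (\<lambda>z. w z / (2 * complex_of_real pi * \<i> * z) * poly f z
                       * poly g (inverse z) * toda_weight t s z)"

definition tau :: "complex measure \<Rightarrow> (complex \<Rightarrow> complex) \<Rightarrow> (nat \<Rightarrow> complex) \<Rightarrow>
    (nat \<Rightarrow> complex) \<Rightarrow> nat \<Rightarrow> complex" where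
  "tau M w t s n = Determinant.det (Matrix.mat n n (\<lambda>(k, l). bilin M w t s (monom 1 k) (monom 1 l)))"

definition hcoef :: "complex measure \<Rightarrow> (complex \<Rightarrow> complex) \<Rightarrow> (nat \<Rightarrow> complex) \<Rightarrow>
    (nat \<Rightarrow> complex) \<Rightarrow> nat \<Rightarrow> complex" where
  "hcoef M w t s n = tau M w t s (Suc n) / tau M w t s n"

end

theory Submission
  imports Defs
begin

text \<open>
  Write B for the bilinear form. Since B f g only depends on the Laurent polynomial f(z) g(1/z),
  multiplication by z moves from one argument to the other as multiplication by 1/z. Hence
  L1 n m * h m = B (z p1 n) (p2 m) vanishes for m \<ge> n + 2 and equals h (n + 1) for m = n + 1 by
  biorthogonality, while for m \<le> n the splitting p2 m = p2 m (0) + z q leaves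
  p2 m (0) * B (z p1 n) 1. To evaluate the last factor, note that r = p1 (n + 1) - z p1 n has
  degree \<le> n and is left-orthogonal to z, ..., z^n; so is the reversed polynomial
  z^n p2 n (1/z), and nondegeneracy of the form forces r = r(0) z^n p2 n (1/z). Pairing with 1
  gives B (z p1 n) 1 = - h n * p1 (n + 1) (0). The statement for M2 is the same one for the form
  with its arguments swapped.
\<close>

lemma monic_basis_expansion:
  fixes P :: "nat \<Rightarrow> 'a::comm_ring_1 poly"
  assumes deg: "\<And>n. degree (P n) = n" and monic: "\<And>n. lead_coeff (P n) = 1"
  shows "degree q \<le> d \<Longrightarrow> \<exists>c. q = (\<Sum>k\<le>d. Polynomial.smult (c k) (P k)) \<and> c d = coeff q d"
proof (induction d arbitrary: q)
  case 0
  have "P 0 = 1"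
    using degree_0_id[OF deg[of 0]] monic[of 0] deg[of 0] by (simp add: one_pCons)
  moreover have "q = [:coeff q 0:]"
    using degree_0_id[of q] 0 by simp
  ultimately show ?case
    by (intro exI[of _ "\<lambda>_. coeff q 0"]) simp
next
  case (Suc d)
  define a where "a = coeff q (Suc d)"
  have "degree (q - Polynomial.smult a (P (Suc d))) \<le> d"
  proof (rule degree_le, intro allI impI)
    fix i assume "d < i"
    then consider "i = Suc d" | "Suc d < i" by linarith
    then show "coeff (q - Polynomial.smult a (P (Suc d))) i = 0"
      by cases (use Suc.prems deg[of "Suc d"] monic[of "Suc d"] in \<open>auto simp: a_def coeff_eq_0\<close>)
  qed
  then obtain c where c: "q - Polynomial.smult a (P (Suc d)) = (\<Sum>k\<le>d. Polynomial.smult (c k) (P k))"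
    using Suc.IH by blast
  have "q = (\<Sum>k\<le>d. Polynomial.smult (c k) (P k)) + Polynomial.smult a (P (Suc d))"
    by (simp flip: c)
  also have "\<dots> = (\<Sum>k\<le>Suc d. Polynomial.smult ((c(Suc d := a)) k) (P k))"
    by (simp add: sum.atMost_Suc)
  finally show ?case
    by (intro exI[of _ "c(Suc d := a)"]) (simp add: a_def)
qed

locale laurent_form =
  fixes B :: "'a::field poly \<Rightarrow> 'a poly \<Rightarrow> 'a"
  assumes add_left: "B (f + g) k = B f k + B g k"
    and smult_left: "B (Polynomial.smult c f) k = c * B f k"
    and add_right: "B k (f + g) = B k f + B k g"
    and smult_right: "B k (Polynomial.smult c f) = c * B k f"
    and laurent_cong: "(\<And>z. z \<noteq> 0 \<Longrightarrow> poly f z * poly g (inverse z) = poly f' z * poly g' (inverse z))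
      \<Longrightarrow> B f g = B f' g'"
begin

lemma zero_left [simp]: "B 0 k = 0"
  using smult_left[of 0 0 k] by simp

lemma zero_right [simp]: "B k 0 = 0"
  using smult_right[of k 0 0] by simp

lemma diff_left: "B (f - g) k = B f k - B g k"
  using add_left[of "f - g" g k] by simp

lemma sum_left: "finite S \<Longrightarrow> B (sum F S) k = (\<Sum>i\<in>S. B (F i) k)"
  by (induction S rule: finite_induct) (simp_all add: add_left)

lemma sum_right: "finite S \<Longrightarrow> B k (sum F S) = (\<Sum>i\<in>S. B k (F i))"
  by (induction S rule: finite_induct) (simp_all add: add_right)

lemma shift: "B (pCons 0 f) (pCons 0 g) = B f g"
  by (rule laurent_cong) (simp add: field_simps)

lemma pair_monom_expansion_right: "B f g = (\<Sum>j\<le>degree g. coeff g j * B f (monom 1 j))"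
proof -
  have "B f g = B f (\<Sum>j\<le>degree g. Polynomial.smult (coeff g j) (monom 1 j))"
    by (simp add: smult_monom poly_as_sum_of_monoms)
  also have "\<dots> = (\<Sum>j\<le>degree g. coeff g j * B f (monom 1 j))"
    by (simp add: sum_right smult_right)
  finally show ?thesis .
qed

lemma laurent_form_swap: "laurent_form (\<lambda>f g. B g f)"
proof
  fix f g f' g' :: "'a poly"
  assume eq: "\<And>z. z \<noteq> 0 \<Longrightarrow> poly f z * poly g (inverse z) = poly f' z * poly g' (inverse z)"
  show "B g f = B g' f'"
  proof (rule laurent_cong)
    fix z :: 'a assume "z \<noteq> 0"
    then show "poly g z * poly f (inverse z) = poly g' z * poly f' (inverse z)"
      using eq[of "inverse z"] by (simp add: mult.commute)
  qed
qed (simp_all add: add_left add_right smult_left smult_right)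

end

locale biorthogonal_system = laurent_form B for B :: "'a::field poly \<Rightarrow> 'a poly \<Rightarrow> 'a" +
  fixes p1 p2 :: "nat \<Rightarrow> 'a poly" and h :: "nat \<Rightarrow> 'a"
  assumes h_nonzero: "h n \<noteq> 0"
    and p1_degree: "degree (p1 n) = n" and p1_monic: "lead_coeff (p1 n) = 1"
    and p2_degree: "degree (p2 n) = n" and p2_monic: "lead_coeff (p2 n) = 1"
    and biorth: "B (p1 n) (p2 m) = (if n = m then h n else 0)"
begin

lemma coeff_p1_degree [simp]: "coeff (p1 n) n = 1"
  using p1_degree p1_monic by metis

lemma p1_nonzero [simp]: "p1 n \<noteq> 0"
  using p1_monic[of n] by auto

lemma pair_p2_of_degree_le:
  assumes "degree q \<le> m"
  shows "B q (p2 m) = coeff q m * h m"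
proof -
  obtain c where q: "q = (\<Sum>k\<le>m. Polynomial.smult (c k) (p1 k))" and "c m = coeff q m"
    using monic_basis_expansion[OF p1_degree p1_monic assms] by blast
  have "B q (p2 m) = (\<Sum>k\<le>m. c k * B (p1 k) (p2 m))"
    by (subst q) (simp add: sum_left smult_left)
  also have "\<dots> = (\<Sum>k\<le>m. if k = m then c m * h m else 0)"
    by (intro sum.cong) (simp_all add: biorth)
  also have "\<dots> = c m * h m"
    by simp
  finally show ?thesis
    using \<open>c m = coeff q m\<close> by simp
qed

lemma biorthogonal_swap: "biorthogonal_system (\<lambda>f g. B g f) p2 p1 h"
proof (intro biorthogonal_system.intro laurent_form_swap biorthogonal_system_axioms.intro)
qed (rule h_nonzero p2_degree p2_monic p1_degree p1_monic | simp add: biorth)+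

lemma pair_p1_of_degree_le:
  assumes "degree q \<le> m"
  shows "B (p1 m) q = coeff q m * h m"
  using biorthogonal_system.pair_p2_of_degree_le[OF biorthogonal_swap assms] .

lemma left_null_imp_zero:
  assumes deg: "degree q < n" and null: "\<And>j. j < n \<Longrightarrow> B q (monom 1 j) = 0"
  shows "q = 0"
proof (rule ccontr)
  assume "q \<noteq> 0"
  define d where "d = degree q"
  have "B q (p2 d) = (\<Sum>j\<le>d. coeff (p2 d) j * B q (monom 1 j))"
    using pair_monom_expansion_right[of q "p2 d"] by (simp add: p2_degree)
  also have "\<dots> = 0"
    using null deg by (simp add: d_def)
  finally have "B q (p2 d) = 0" .
  moreover have "B q (p2 d) = lead_coeff q * h d"
    using pair_p2_of_degree_le d_def by simp
  ultimately show False
    using \<open>q \<noteq> 0\<close> h_nonzero by simp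
qed

lemma left_null_vanishing_at_zero:
  assumes deg: "degree g \<le> n" and root: "poly g 0 = 0"
    and null: "\<And>k. 1 \<le> k \<Longrightarrow> k \<le> n \<Longrightarrow> B g (monom 1 k) = 0"
  shows "g = 0"
proof -
  obtain a q where "g = pCons a q"
    by (rule pCons_cases)
  with root have g: "g = pCons 0 q"
    by simp
  have "q = 0"
  proof (cases "q = 0")
    case False
    then have "degree q < n"
      using deg g by simp
    moreover have "B q (monom 1 j) = 0" if "j < n" for j
      using null[of "Suc j"] that shift[of q "monom 1 j"] by (simp add: g monom_Suc)
    ultimately show ?thesis
      by (rule left_null_imp_zero)
  qed
  with g show ?thesis
    by simp
qed

lemma pair_reflect_p2_monom:
  assumes "k \<le> n"
  shows "B (reflect_poly (p2 n)) (monom 1 k) = (if k = 0 then h n else 0)"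
proof -
  have "B (reflect_poly (p2 n)) (monom 1 k) = B (monom 1 (n - k)) (p2 n)"
  proof (rule laurent_cong)
    fix z :: 'a assume "z \<noteq> 0"
    have "z ^ n * inverse z ^ k = z ^ (n - k)"
      using assms \<open>z \<noteq> 0\<close> by (simp add: power_diff power_inverse divide_inverse)
    then show "poly (reflect_poly (p2 n)) z * poly (monom 1 k) (inverse z)
        = poly (monom 1 (n - k)) z * poly (p2 n) (inverse z)"
      using \<open>z \<noteq> 0\<close> by (simp add: poly_reflect_poly_nz p2_degree poly_monom mult_ac)
  qed
  also have "\<dots> = (if k = 0 then h n else 0)"
    using pair_p2_of_degree_le[of "monom 1 (n - k)" n] assms
    by (auto simp: degree_monom_eq coeff_monom)
  finally show ?thesis .
qed

lemma left_null_eq_smult_reflect_p2: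
  assumes deg: "degree r \<le> n" and null: "\<And>k. 1 \<le> k \<Longrightarrow> k \<le> n \<Longrightarrow> B r (monom 1 k) = 0"
  shows "r = Polynomial.smult (poly r 0) (reflect_poly (p2 n))"
proof -
  let ?g = "r - Polynomial.smult (poly r 0) (reflect_poly (p2 n))"
  have "?g = 0"
  proof (rule left_null_vanishing_at_zero)
    show "degree ?g \<le> n"
      using deg degree_reflect_poly_le[of "p2 n"]
      by (intro degree_diff_le) (simp_all add: p2_degree)
    show "poly ?g 0 = 0"
      by (simp add: p2_monic)
    fix k assume "1 \<le> k" "k \<le> n"
    then show "B ?g (monom 1 k) = 0"
      using null pair_reflect_p2_monom by (simp add: diff_left smult_left)
  qed
  then show ?thesis
    by simp
qed

lemma pair_shift_p1_one: "B (pCons 0 (p1 n)) 1 = - h n * poly (p1 (Suc n)) 0"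
proof -
  define r where "r = p1 (Suc n) - pCons 0 (p1 n)"
  have "degree r \<le> n"
  proof (rule degree_le, intro allI impI)
    fix i assume "n < i"
    then consider "i = Suc n" | "Suc n < i"
      by linarith
    then show "coeff r i = 0"
      by cases (simp_all add: r_def coeff_eq_0 p1_degree)
  qed
  moreover have "B r (monom 1 k) = 0" if "1 \<le> k" "k \<le> n" for k
  proof -
    obtain j where k: "k = Suc j"
      using \<open>1 \<le> k\<close> by (cases k) auto
    have "B (p1 (Suc n)) (monom 1 k) = 0"
      using pair_p1_of_degree_le[of "monom 1 k" "Suc n"] that by (simp add: degree_monom_eq)
    moreover have "B (pCons 0 (p1 n)) (monom 1 k) = 0"
      using shift[of "p1 n" "monom 1 j"] pair_p1_of_degree_le[of "monom 1 j" n] that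
      by (simp add: k monom_Suc degree_monom_eq)
    ultimately show ?thesis
      by (simp add: r_def diff_left)
  qed
  ultimately have "r = Polynomial.smult (poly r 0) (reflect_poly (p2 n))"
    by (rule left_null_eq_smult_reflect_p2)
  then have "B r 1 = B (Polynomial.smult (poly r 0) (reflect_poly (p2 n))) 1"
    by (rule arg_cong)
  also have "\<dots> = poly r 0 * h n"
    using pair_reflect_p2_monom[of 0 n] by (simp add: smult_left)
  also have "poly r 0 = poly (p1 (Suc n)) 0"
    by (simp add: r_def)
  finally have "B r 1 = poly (p1 (Suc n)) 0 * h n" .
  moreover have "B (p1 (Suc n)) 1 = 0"
    using pair_p1_of_degree_le[of 1 "Suc n"] by simp
  moreover have "B (pCons 0 (p1 n)) 1 = B (p1 (Suc n)) 1 - B r 1"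
    by (simp add: r_def diff_left)
  ultimately show ?thesis
    by simp
qed

lemma pair_p1_expansion:
  assumes "finite {m. c m \<noteq> 0}"
  shows "B (\<Sum>m | c m \<noteq> 0. Polynomial.smult (c m) (p1 m)) (p2 k) = c k * h k"
proof -
  have "B (\<Sum>m | c m \<noteq> 0. Polynomial.smult (c m) (p1 m)) (p2 k)
      = (\<Sum>m | c m \<noteq> 0. c m * B (p1 m) (p2 k))"
    by (simp add: sum_left[OF assms] smult_left)
  also have "\<dots> = (\<Sum>m | c m \<noteq> 0. if m = k then c k * h k else 0)"
    by (intro sum.cong) (simp_all add: biorth)
  also have "\<dots> = c k * h k"
    using assms by simp
  finally show ?thesis .
qed

lemma recurrence_row:
  assumes fin: "finite {m. L m \<noteq> 0}"
    and expand: "[:0, 1:] * p1 n = (\<Sum>m | L m \<noteq> 0. Polynomial.smult (L m) (p1 m))"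
  shows "L (Suc n) = 1 \<and> (\<forall>m. m \<ge> n + 2 \<longrightarrow> L m = 0)
    \<and> (\<forall>m \<le> n. L m = - h n * poly (p1 (Suc n)) 0 * inverse (h m) * poly (p2 m) 0)"
proof -
  let ?X = "pCons 0 (p1 n)"
  have L: "L m = B ?X (p2 m) / h m" for m
    using pair_p1_expansion[OF fin, of m] expand h_nonzero[of m] by (simp add: eq_divide_eq)
  have deg_X: "degree ?X = Suc n"
    by (simp add: p1_degree)
  have "L (Suc n) = 1"
    using L[of "Suc n"] pair_p2_of_degree_le[of ?X "Suc n"] deg_X h_nonzero by simp
  moreover have "L m = 0" if "m \<ge> n + 2" for m
    using L[of m] pair_p2_of_degree_le[of ?X m] deg_X that by (simp add: coeff_eq_0)
  moreover have "L m = - h n * poly (p1 (Suc n)) 0 * inverse (h m) * poly (p2 m) 0" if "m \<le> n" for m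
  proof -
    obtain a q where a_q: "p2 m = pCons a q"
      by (rule pCons_cases)
    have "coeff q i = 0" if "i \<ge> n" for i
      using that \<open>m \<le> n\<close> coeff_eq_0[of "p2 m" "Suc i"] unfolding p2_degree by (simp add: a_q)
    then have "B (p1 n) q = 0"
      using pair_p1_of_degree_le[of q n] degree_le[of n q] by simp
    have "B ?X (p2 m) = B ?X (Polynomial.smult a 1 + pCons 0 q)"
      by (simp add: a_q)
    also have "\<dots> = a * B ?X 1 + B (p1 n) q"
      by (simp only: add_right smult_right shift)
    finally have "B ?X (p2 m) = poly (p2 m) 0 * B ?X 1"
      using \<open>B (p1 n) q = 0\<close> by (simp add: a_q)
    then show ?thesis
      using L[of m] pair_shift_p1_one by (simp add: divide_inverse mult_ac)
  qed
  ultimately show ?thesis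
    by blast
qed

end

lemma integrable_mult_bounded:
  fixes f g :: "'a \<Rightarrow> 'b::{real_normed_div_algebra, banach, second_countable_topology}"
  assumes f: "integrable M f" and g: "g \<in> borel_measurable M"
    and bound: "\<And>x. x \<in> space M \<Longrightarrow> norm (g x) \<le> K"
  shows "integrable M (\<lambda>x. f x * g x)"
proof -
  have "integrable M (\<lambda>x. K * norm (f x))"
    using f by (intro integrable_mult_right integrable_norm)
  then show ?thesis
  proof (rule Bochner_Integration.integrable_bound)
    show "(\<lambda>x. f x * g x) \<in> borel_measurable M"
      using borel_measurable_integrable[OF f] g by (rule borel_measurable_times)
    show "AE x in M. norm (f x * g x) \<le> norm (K * norm (f x))"
    proof (rule AE_I2)
      fix x assume "x \<in> space M"
      then have "norm (f x) * norm (g x) \<le> norm (f x) * \<bar>K\<bar>"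
        using bound by (intro mult_left_mono) fastforce+
      then show "norm (f x * g x) \<le> norm (K * norm (f x))"
        by (simp add: norm_mult abs_mult mult.commute)
    qed
  qed
qed

definition circle_kernel :: "complex poly \<Rightarrow> complex poly \<Rightarrow> complex \<Rightarrow> complex" where
  "circle_kernel f g z = poly f z * poly g (inverse z) / (2 * complex_of_real pi * \<i> * z)"

lemma circle_kernel_add [simp]:
  "circle_kernel (f + g) k z = circle_kernel f k z + circle_kernel g k z"
  "circle_kernel k (f + g) z = circle_kernel k f z + circle_kernel k g z"
  by (simp_all add: circle_kernel_def algebra_simps add_divide_distrib)

lemma circle_kernel_smult [simp]:
  "circle_kernel (Polynomial.smult c f) k z = c * circle_kernel f k z"
  "circle_kernel k (Polynomial.smult c f) z = c * circle_kernel k f z"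
  by (simp_all add: circle_kernel_def)

lemma bilin_circle_kernel:
  "bilin M w t s f g = (\<integral>z. w z * toda_weight t s z * circle_kernel f g z \<partial>M)"
  unfolding bilin_def circle_kernel_def by (simp only: divide_inverse mult_ac)

lemma integrable_circle_kernel:
  assumes space: "space M = sphere 0 1"
    and sets: "sets M = sets (restrict_space borel (sphere (0::complex) 1))"
    and int: "integrable M (\<lambda>z. w z * toda_weight t s z)"
  shows "integrable M (\<lambda>z. w z * toda_weight t s z * circle_kernel f g z)"
proof -
  have cont: "continuous_on (sphere 0 1) (circle_kernel f g)"
    unfolding circle_kernel_def by (intro continuous_intros) auto
  then have "bounded (circle_kernel f g ` sphere 0 1)"
    by (intro compact_imp_bounded compact_continuous_image compact_sphere)
  then obtain K where "\<forall>z\<in>sphere 0 1. norm (circle_kernel f g z) \<le> K"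
    by (auto simp: bounded_iff)
  moreover have "circle_kernel f g \<in> borel_measurable M"
    using borel_measurable_continuous_on_restrict[OF cont]
    by (simp add: measurable_cong_sets[OF sets refl])
  ultimately show ?thesis
    using space by (intro integrable_mult_bounded[OF int]) auto
qed

lemma laurent_form_bilin:
  assumes space: "space M = sphere 0 1"
    and sets: "sets M = sets (restrict_space borel (sphere (0::complex) 1))"
    and int: "integrable M (\<lambda>z. w z * toda_weight t s z)"
  shows "laurent_form (bilin M w t s)"
proof
  note integrable = integrable_circle_kernel[OF space sets int]
  fix f g k :: "complex poly" and c :: complex
  show "bilin M w t s (f + g) k = bilin M w t s f k + bilin M w t s g k"
    "bilin M w t s k (f + g) = bilin M w t s k f + bilin M w t s k g"
    by (simp_all add: bilin_circle_kernel integrable distrib_left)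
  show "bilin M w t s (Polynomial.smult c f) k = c * bilin M w t s f k"
    "bilin M w t s k (Polynomial.smult c f) = c * bilin M w t s k f"
    by (simp_all add: bilin_circle_kernel mult.left_commute)
next
  fix f g f' g' :: "complex poly"
  assume "\<And>z. z \<noteq> 0 \<Longrightarrow> poly f z * poly g (inverse z) = poly f' z * poly g' (inverse z)"
  \<comment> \<open>at z = 0 both kernels are 0, because division by 0 yields 0\<close>
  then have "circle_kernel f g = circle_kernel f' g'"
    by (auto simp: fun_eq_iff circle_kernel_def)
  then show "bilin M w t s f g = bilin M w t s f' g'"
    by (simp add: bilin_circle_kernel)
qed

lemma tau_0: "tau M w t s 0 = 1"
  unfolding tau_def by (simp add: Determinant.det_def)

lemma hcoef_nonzero:
  assumes "\<And>n. n \<ge> 1 \<Longrightarrow> tau M w t s n \<noteq> 0"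
  shows "hcoef M w t s n \<noteq> 0"
  using assms[of n] assms[of "Suc n"] tau_0[of M w t s] unfolding hcoef_def by (cases n) auto

theorem theorem2p7:
  fixes M :: "complex measure" and w :: "complex \<Rightarrow> complex"
    and t s :: "nat \<Rightarrow> complex"
    and p1 p2 :: "nat \<Rightarrow> complex poly"
    and L1 M2 :: "nat \<Rightarrow> nat \<Rightarrow> complex"
  assumes space: "space M = sphere 0 1"
    and sets: "sets M = sets (restrict_space borel (sphere (0::complex) 1))"
    and fin: "finite_measure M"
    and w_int: "integrable M w"
    and conv: "\<And>z. z \<in> sphere 0 1 \<Longrightarrow>
         summable (\<lambda>i. t (Suc i) * z ^ Suc i - s (Suc i) * inverse z ^ Suc i)"
    and int: "integrable M (\<lambda>z. w z * toda_weight t s z)"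
    and tau_nz: "\<And>n. n \<ge> 1 \<Longrightarrow> tau M w t s n \<noteq> 0"
    and p1_deg: "\<And>n. degree (p1 n) = n" and p1_monic: "\<And>n. lead_coeff (p1 n) = 1"
    and p2_deg: "\<And>n. degree (p2 n) = n" and p2_monic: "\<And>n. lead_coeff (p2 n) = 1"
    and orth: "\<And>n m. bilin M w t s (p1 n) (p2 m) = (if n = m then hcoef M w t s n else 0)"
    and L1_fin: "\<And>n. finite {m. L1 n m \<noteq> 0}"
    and L1_def: "\<And>n. [:0, 1:] * p1 n = (\<Sum>m | L1 n m \<noteq> 0. Polynomial.smult (L1 n m) (p1 m))"
    and M2_fin: "\<And>n. finite {m. M2 n m \<noteq> 0}"
    and M2_def: "\<And>n. [:0, 1:] * p2 n = (\<Sum>m | M2 n m \<noteq> 0. Polynomial.smult (M2 n m) (p2 m))"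
  shows "\<forall>n. L1 n (Suc n) = 1 \<and> M2 n (Suc n) = 1
           \<and> (\<forall>m. m \<ge> n + 2 \<longrightarrow> L1 n m = 0 \<and> M2 n m = 0)
           \<and> (\<forall>m \<le> n.
                L1 n m = - hcoef M w t s n * poly (p1 (Suc n)) 0
                           * inverse (hcoef M w t s m) * poly (p2 m) 0
              \<and> M2 n m = - hcoef M w t s n * poly (p2 (Suc n)) 0
                           * inverse (hcoef M w t s m) * poly (p1 m) 0)"
proof -
  interpret biorthogonal_system "bilin M w t s" p1 p2 "hcoef M w t s"
  proof (intro biorthogonal_system.intro laurent_form_bilin[OF space sets int]
      biorthogonal_system_axioms.intro)
    show "hcoef M w t s n \<noteq> 0" for n
      using tau_nz by (rule hcoef_nonzero)
  qed (rule p1_deg p1_monic p2_deg p2_monic orth)+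
  interpret swapped: biorthogonal_system "\<lambda>f g. bilin M w t s g f" p2 p1 "hcoef M w t s"
    by (rule biorthogonal_swap)
  show ?thesis
    using recurrence_row[OF L1_fin L1_def] swapped.recurrence_row[OF M2_fin M2_def] by auto
qed

end
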